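(* A norm $\|\cdot\|$ on $\mathbb{R}^2$ is an $F$-norm if and only if (i) it is radially symmetric, i.e. $\|(x_0,x_1)\|=\|(|x_0|,|x_1|)\|$, and (ii) the Lebesgue derivative of $t\mapsto\|(t,1)\|$ on $[0,\infty)$ is almost everywhere equal to a univariate distribution function $F$ on $[0,\infty)$ with finite first moment equal to $\|(0,1)\|$. In that case $\|\cdot\|=\|\cdot\|_F$.
   Context: For a random variable $X\ge0$ a.s. with $0<E(X)<\infty$ and distribution function $F$, $\|(x_0,x_1)\|_F=E(\max(|x_0|,|x_1|X))$; an $F$-norm on $\mathbb{R}^2$ is any norm of this form. *)

theory Defs
  imports "HOL-Probability.Probability"
begin

definition is_norm_R2 :: "(real \<times> real \<Rightarrow> real) \<Rightarrow> bool" where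
  "is_norm_R2 N \<longleftrightarrow>
     (\<forall>x. 0 \<le> N x) \<and> (\<forall>x. N x = 0 \<longleftrightarrow> x = (0, 0)) \<and>
     (\<forall>c a b. N (c * a, c * b) = \<bar>c\<bar> * N (a, b)) \<and>
     (\<forall>x y. N (fst x + fst y, snd x + snd y) \<le> N x + N y)"

definition admissible_law :: "real measure \<Rightarrow> bool" where
  "admissible_law M \<longleftrightarrow> real_distribution M \<and> (AE \<xi> in M. 0 \<le> \<xi>) \<and>
     integrable M (\<lambda>\<xi>. \<xi>) \<and> 0 < (\<integral>\<xi>. \<xi> \<partial>M)"

text \<open>The F-norm ||(x0,x1)||_F = E max(|x0|, |x1| X), where F = cdf M is the law of X.\<close>
definition F_norm :: "real measure \<Rightarrow> real \<times> real \<Rightarrow> real" where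
  "F_norm M x = (\<integral>\<xi>. max \<bar>fst x\<bar> (\<bar>snd x\<bar> * \<xi>) \<partial>M)"

definition is_F_norm :: "(real \<times> real \<Rightarrow> real) \<Rightarrow> bool" where
  "is_F_norm N \<longleftrightarrow> (\<exists>M. admissible_law M \<and> N = F_norm M)"

definition radially_symmetric :: "(real \<times> real \<Rightarrow> real) \<Rightarrow> bool" where
  "radially_symmetric N \<longleftrightarrow> (\<forall>x0 x1. N (x0, x1) = N (\<bar>x0\<bar>, \<bar>x1\<bar>))"

definition derivative_condition :: "(real \<times> real \<Rightarrow> real) \<Rightarrow> real measure \<Rightarrow> bool" where
  "derivative_condition N M \<longleftrightarrow>
     real_distribution M \<and> (AE \<xi> in M. 0 \<le> \<xi>) \<and> integrable M (\<lambda>\<xi>. \<xi>) \<and>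
     (\<integral>\<xi>. \<xi> \<partial>M) = N (0, 1) \<and>
     (AE t in lborel. 0 < t \<longrightarrow> ((\<lambda>s. N (s, 1)) has_real_derivative cdf M t) (at t))"

end

theory Submission
  imports Defs
begin

(* For t \<ge> 0 the function g t = \<parallel>(t, 1)\<parallel>_F = E max t X has F t as a subgradient, so its
   difference quotients on [t, s] lie between F t and F s; hence g' = F at the continuity points
   of F, that is almost everywhere.
   Conversely, for a norm N the function h t = N (t, 1) is convex, so the a.e. derivative F is a
   subgradient of h almost everywhere, and by right continuity of F at every t \<ge> 0.  Two functions
   with the same monotone subgradients F on [a, b] have the same increment: on a partition of
   mesh \<delta> their increments differ by at most (F b - F a) \<delta>.  So h = g on [0, \<infinity>), since
   h 0 = E X = g 0.  Comparing N (t, 0) = t N (1, 0) with N (t, 1) = g t = t + O(1) gives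
   N (1, 0) = 1, and radial symmetry with homogeneity extends h = g to the whole plane. *)

lemma eq_0_if_multiples_bounded:
  fixes x c :: real
  assumes "\<And>n::nat. real n * \<bar>x\<bar> \<le> c"
  shows "x = 0"
proof (rule ccontr)
  assume "x \<noteq> 0"
  then obtain n where "c < real n * \<bar>x\<bar>" using ex_less_of_nat_mult[of "\<bar>x\<bar>" c] by auto
  with assms[of n] show False by simp
qed

definition subgradients_on :: "real set \<Rightarrow> (real \<Rightarrow> real) \<Rightarrow> (real \<Rightarrow> real) \<Rightarrow> bool" where
  "subgradients_on S g F \<longleftrightarrow> (\<forall>t\<in>S. \<forall>s\<in>S. F t * (s - t) \<le> g s - g t)"

lemma subgradients_on_subset:
  "subgradients_on S g F \<Longrightarrow> T \<subseteq> S \<Longrightarrow> subgradients_on T g F"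
  unfolding subgradients_on_def by blast

lemma subgradients_on_increment_bounds:
  assumes "subgradients_on S g F" "t \<in> S" "s \<in> S"
  shows "F t * (s - t) \<le> g s - g t" and "g s - g t \<le> F s * (s - t)"
  using assms unfolding subgradients_on_def by (auto simp: algebra_simps dest: bspec[of _ _ s])

lemma has_real_derivative_if_subgradients:
  fixes g F :: "real \<Rightarrow> real"
  assumes sub: "subgradients_on S g F" and "open S" "x \<in> S" and cont: "isCont F x"
  shows "(g has_real_derivative F x) (at x)"
proof -
  have quotient_bounds:
    "min (F y) (F x) \<le> (g y - g x) / (y - x) \<and> (g y - g x) / (y - x) \<le> max (F y) (F x)"
    if "y \<in> S" "y \<noteq> x" for y
    using subgradients_on_increment_bounds[OF sub, of x y] subgradients_on_increment_bounds[OF sub, of y x]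
      that \<open>x \<in> S\<close>
    by (cases "y < x") (auto simp: min_le_iff_disj le_max_iff_disj field_simps)
  have "((\<lambda>y. min (F y) (F x)) \<longlongrightarrow> F x) (at x)" "((\<lambda>y. max (F y) (F x)) \<longlongrightarrow> F x) (at x)"
    using cont by (auto intro!: tendsto_eq_intros simp: isCont_def)
  then have "((\<lambda>y. (g y - g x) / (y - x)) \<longlongrightarrow> F x) (at x)"
  proof (rule tendsto_sandwich[rotated 2])
    have "\<forall>\<^sub>F y in at x. y \<in> S \<and> y \<noteq> x"
      using \<open>open S\<close> \<open>x \<in> S\<close> by (simp add: eventually_at_topological eventually_conj_iff) blast
    then show "\<forall>\<^sub>F y in at x. min (F y) (F x) \<le> (g y - g x) / (y - x)"
      and "\<forall>\<^sub>F y in at x. (g y - g x) / (y - x) \<le> max (F y) (F x)"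
      by (auto elim!: eventually_mono dest: quotient_bounds)
  qed
  then show ?thesis by (simp add: has_field_derivative_iff)
qed

lemma subgradient_at_right_limit:
  fixes h F :: "real \<Rightarrow> real"
  assumes "isCont h t" "continuous (at_right t) F" "t islimpt S" "S \<subseteq> {t<..}"
    and "\<And>u. u \<in> S \<Longrightarrow> F u * (s - u) \<le> h s - h u"
  shows "F t * (s - t) \<le> h s - h t"
proof -
  have "(F \<longlongrightarrow> F t) (at t within S)" "(h \<longlongrightarrow> h t) (at t within S)"
    using assms(1,2,4)
    by (auto simp: continuous_within isCont_def intro: tendsto_within_subset tendsto_mono[OF at_le])
  then have "((\<lambda>u. h s - h u - F u * (s - u)) \<longlongrightarrow> h s - h t - F t * (s - t)) (at t within S)"
    by (auto intro!: tendsto_eq_intros)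
  moreover have "\<forall>\<^sub>F u in at t within S. 0 \<le> h s - h u - F u * (s - u)"
    using assms(5) by (auto simp: eventually_at_filter)
  moreover have "\<not> trivial_limit (at t within S)"
    using assms(3) by (simp add: trivial_limit_within)
  ultimately have "0 \<le> h s - h t - F t * (s - t)"
    by (rule tendsto_lowerbound)
  then show ?thesis by simp
qed

lemma islimpt_right_if_AE_lborel:
  fixes t :: real
  assumes "AE u in lborel. P u"
  shows "t islimpt {u. t < u \<and> P u}"
  unfolding islimpt_approachable_real
proof (intro allI impI)
  fix e :: real assume "0 < e"
  show "\<exists>u\<in>{u. t < u \<and> P u}. u \<noteq> t \<and> \<bar>u - t\<bar> < e"
  proof (rule ccontr)
    assume no_point: "\<not> ?thesis"
    have "AE u in lborel. u \<notin> {t<..<t + e}"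
      using assms by eventually_elim (use no_point in auto)
    then have "{t<..<t + e} \<in> null_sets lborel"
      by (subst AE_iff_null_sets) auto
    with \<open>0 < e\<close> show False by auto
  qed
qed

lemma subgradients_on_eq_increments:
  fixes F g h :: "real \<Rightarrow> real"
  assumes g: "subgradients_on {a..b} g F" and h: "subgradients_on {a..b} h F" and "a \<le> b"
  shows "g b - g a = h b - h a"
proof -
  define d where "d s = g s - h s" for s
  have d_step: "\<bar>d s - d t\<bar> \<le> (F s - F t) * (s - t)" if "a \<le> t" "t \<le> s" "s \<le> b" for s t
    using subgradients_on_increment_bounds[OF g, of t s] subgradients_on_increment_bounds[OF h, of t s]
      that unfolding d_def by (simp add: abs_le_iff left_diff_distrib)
  have F_mono: "F a \<le> F b"
  proof (cases "a = b")
    case False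
    then have "F a * (b - a) \<le> F b * (b - a)"
      using subgradients_on_increment_bounds[OF g, of a b] \<open>a \<le> b\<close>
      by (meson atLeastAtMost_iff order.trans order_refl)
    then show ?thesis using False \<open>a \<le> b\<close> by simp
  qed simp
  have "real n * \<bar>d b - d a\<bar> \<le> (F b - F a) * (b - a)" for n :: nat
  proof (cases "n = 0")
    case True
    then show ?thesis using F_mono \<open>a \<le> b\<close> by simp
  next
    case False
    define \<delta> where "\<delta> = (b - a) / n"
    have \<delta>_nonneg: "0 \<le> \<delta>" using \<open>a \<le> b\<close> by (simp add: \<delta>_def)
    have n\<delta>: "real n * \<delta> = b - a" using False by (simp add: \<delta>_def)
    have "\<bar>d (a + k * \<delta>) - d a\<bar> \<le> (F (a + k * \<delta>) - F a) * \<delta>" if "k \<le> n" for k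
      using that
    proof (induction k)
      case (Suc k)
      have "real (Suc k) * \<delta> \<le> b - a"
        using Suc.prems n\<delta> \<delta>_nonneg by (metis mult_right_mono of_nat_le_iff)
      then have "\<bar>d (a + Suc k * \<delta>) - d (a + k * \<delta>)\<bar> \<le> (F (a + Suc k * \<delta>) - F (a + k * \<delta>)) * \<delta>"
        using d_step[of "a + k * \<delta>" "a + Suc k * \<delta>"] \<delta>_nonneg by (simp add: algebra_simps)
      with Suc show ?case by (simp add: algebra_simps)
    qed simp
    from this[of n] show ?thesis
      using False n\<delta> by (simp add: \<delta>_def field_simps)
  qed
  then have "d b - d a = 0" by (rule eq_0_if_multiples_bounded)
  then show ?thesis unfolding d_def by simp
qed

lemma F_norm_homogeneous: "F_norm M (c * a, c * b) = \<bar>c\<bar> * F_norm M (a, b)"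
proof -
  have "max \<bar>c * a\<bar> (\<bar>c * b\<bar> * \<xi>) = \<bar>c\<bar> * max \<bar>a\<bar> (\<bar>b\<bar> * \<xi>)" for \<xi> :: real
    by (simp add: abs_mult max_mult_distrib_left mult.assoc)
  then show ?thesis by (simp add: F_norm_def)
qed

lemma radially_symmetric_F_norm: "radially_symmetric (F_norm M)"
  by (simp add: radially_symmetric_def F_norm_def)

context real_distribution
begin

lemma F_norm_first_axis: "F_norm M (a, 0) = \<bar>a\<bar>"
  using prob_space by (simp add: F_norm_def)

lemma F_norm_zero_one:
  assumes "AE \<xi> in M. 0 \<le> \<xi>"
  shows "F_norm M (0, 1) = (\<integral>\<xi>. \<xi> \<partial>M)"
  unfolding F_norm_def using assms by (intro integral_cong_AE) auto

lemma subgradients_F_norm: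
  assumes int: "integrable M (\<lambda>\<xi>. \<xi>)"
  shows "subgradients_on {0..} (\<lambda>s. F_norm M (s, 1)) (cdf M)"
  unfolding subgradients_on_def
proof (intro ballI)
  fix t s :: real
  assume "t \<in> {0..}" "s \<in> {0..}"
  have max_int: "integrable M (\<lambda>\<xi>. max a \<xi>)" for a
    using int by (intro integrable_max) auto
  have "cdf M t * (s - t) = (\<integral>\<xi>. (s - t) * indicator {..t} \<xi> \<partial>M)"
    by (simp add: cdf_def mult.commute)
  also have "\<dots> \<le> (\<integral>\<xi>. max s \<xi> - max t \<xi> \<partial>M)"
    by (intro integral_mono max_int Bochner_Integration.integrable_diff integrable_mult_right
        integrable_real_indicator) (auto simp: indicator_def max_def less_top[symmetric])
  also have "\<dots> = F_norm M (s, 1) - F_norm M (t, 1)"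
    using \<open>t \<in> {0..}\<close> \<open>s \<in> {0..}\<close>
    by (simp add: F_norm_def Bochner_Integration.integral_diff[OF max_int max_int])
  finally show "cdf M t * (s - t) \<le> F_norm M (s, 1) - F_norm M (t, 1)" .
qed

lemma F_norm_line_bounds:
  assumes int: "integrable M (\<lambda>\<xi>. \<xi>)" and nonneg: "AE \<xi> in M. 0 \<le> \<xi>" and "0 \<le> t"
  shows "t \<le> F_norm M (t, 1)" and "F_norm M (t, 1) \<le> t + (\<integral>\<xi>. \<xi> \<partial>M)"
proof -
  have "(\<integral>\<xi>. t \<partial>M) \<le> (\<integral>\<xi>. max t \<xi> \<partial>M)"
    using int by (intro integral_mono integrable_max) auto
  then show "t \<le> F_norm M (t, 1)"
    using \<open>0 \<le> t\<close> prob_space by (simp add: F_norm_def)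
  have "F_norm M (t, 1) - F_norm M (0, 1) \<le> cdf M t * t"
    using subgradients_on_increment_bounds(2)[OF subgradients_F_norm[OF int], of 0 t] \<open>0 \<le> t\<close> by simp
  also have "\<dots> \<le> t"
    using \<open>0 \<le> t\<close> cdf_nonneg[of t] cdf_bounded_prob[of t] by (simp add: mult_left_le_one_le)
  finally show "F_norm M (t, 1) \<le> t + (\<integral>\<xi>. \<xi> \<partial>M)"
    using F_norm_zero_one[OF nonneg] by simp
qed

lemma AE_F_norm_has_real_derivative_cdf:
  assumes "integrable M (\<lambda>\<xi>. \<xi>)"
  shows "AE t in lborel. 0 < t \<longrightarrow> ((\<lambda>s. F_norm M (s, 1)) has_real_derivative cdf M t) (at t)"
proof -
  have sub: "subgradients_on {0<..} (\<lambda>s. F_norm M (s, 1)) (cdf M)"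
    using subgradients_F_norm[OF assms] by (rule subgradients_on_subset) auto
  have "AE t in lborel. t \<notin> {x. measure M {x} \<noteq> 0}"
    by (intro AE_not_in countable_imp_null_set_lborel countable_support)
  then show ?thesis
    by eventually_elim (auto simp: isCont_cdf intro: has_real_derivative_if_subgradients[OF sub])
qed

end

lemma is_norm_R2_homogeneous: "is_norm_R2 N \<Longrightarrow> N (c * a, c * b) = \<bar>c\<bar> * N (a, b)"
  unfolding is_norm_R2_def by blast

lemma is_norm_R2_triangle: "is_norm_R2 N \<Longrightarrow> N (a + a', b + b') \<le> N (a, b) + N (a', b')"
  unfolding is_norm_R2_def by (metis fst_conv snd_conv)

lemma is_norm_R2_pos: "is_norm_R2 N \<Longrightarrow> x \<noteq> (0, 0) \<Longrightarrow> 0 < N x"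
  unfolding is_norm_R2_def by (metis order_less_le)

lemma is_norm_R2_convex_on_line:
  assumes "is_norm_R2 N"
  shows "convex_on UNIV (\<lambda>s. N (s, b))"
proof (rule convex_onI)
  fix \<mu> x y :: real assume "0 < \<mu>" "\<mu> < 1"
  have "N ((1 - \<mu>) * x + \<mu> * y, (1 - \<mu>) * b + \<mu> * b) \<le> N ((1 - \<mu>) * x, (1 - \<mu>) * b) + N (\<mu> * y, \<mu> * b)"
    using assms by (rule is_norm_R2_triangle)
  also have "\<dots> = (1 - \<mu>) * N (x, b) + \<mu> * N (y, b)"
    using \<open>0 < \<mu>\<close> \<open>\<mu> < 1\<close> by (simp add: is_norm_R2_homogeneous[OF assms])
  finally show "N ((1 - \<mu>) *\<^sub>R x + \<mu> *\<^sub>R y, b) \<le> (1 - \<mu>) * N (x, b) + \<mu> * N (y, b)"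
    by (simp add: algebra_simps)
qed auto

lemma is_norm_R2_isCont_on_line: "is_norm_R2 N \<Longrightarrow> isCont (\<lambda>s. N (s, b)) t"
  using convex_on_continuous[OF open_UNIV is_norm_R2_convex_on_line] by (simp add: continuous_on_eq_continuous_at)

lemma is_norm_R2_diff_second_le:
  assumes "is_norm_R2 N"
  shows "\<bar>N (a, b) - N (a, b')\<bar> \<le> \<bar>b - b'\<bar> * N (0, 1)"
proof -
  have "N (a, b) \<le> N (a, b') + \<bar>b - b'\<bar> * N (0, 1)" for b b'
    using is_norm_R2_triangle[OF assms, of a 0 b' "b - b'"] is_norm_R2_homogeneous[OF assms, of "b - b'" 0 1]
    by simp
  from this[of b b'] this[of b' b] show ?thesis
    by (simp add: abs_le_iff abs_minus_commute)
qed

lemma radially_symmetric_homogeneous_eqI: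
  fixes N N' :: "real \<times> real \<Rightarrow> real"
  assumes "radially_symmetric N" "radially_symmetric N'"
    and "\<And>c a b. N (c * a, c * b) = \<bar>c\<bar> * N (a, b)" "\<And>c a b. N' (c * a, c * b) = \<bar>c\<bar> * N' (a, b)"
    and "\<And>t. 0 \<le> t \<Longrightarrow> N (t, 1) = N' (t, 1)" "N (1, 0) = N' (1, 0)"
  shows "N = N'"
proof
  have reduce: "N (a, b) = (if b = 0 then \<bar>a\<bar> * N (1, 0) else \<bar>b\<bar> * N (\<bar>a\<bar> / \<bar>b\<bar>, 1))"
    if "radially_symmetric N" "\<And>c a b. N (c * a, c * b) = \<bar>c\<bar> * N (a, b)" for N :: "real \<times> real \<Rightarrow> real" and a b
  proof -
    have "N (\<bar>a\<bar>, \<bar>b\<bar>) = N (\<bar>b\<bar> * (\<bar>a\<bar> / \<bar>b\<bar>), \<bar>b\<bar> * 1)" if "b \<noteq> 0"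
      using that by simp
    then show ?thesis
      using that(1) that(2)[of a 1 0] that(2)[of "\<bar>b\<bar>" "\<bar>a\<bar> / \<bar>b\<bar>" 1]
      unfolding radially_symmetric_def by (metis abs_abs mult.right_neutral mult_zero_right)
  qed
  fix x :: "real \<times> real"
  show "N x = N' x"
    using reduce[OF assms(1,3), of "fst x" "snd x"] reduce[OF assms(2,4), of "fst x" "snd x"] assms(5,6)
    by simp
qed

lemma subgradients_norm_line_if_derivative_condition:
  assumes norm: "is_norm_R2 N" and dc: "derivative_condition N M"
  shows "subgradients_on {0..} (\<lambda>s. N (s, 1)) (cdf M)"
  unfolding subgradients_on_def
proof (intro ballI)
  fix t s :: real assume "t \<in> {0..}"
  interpret real_distribution M
    using dc unfolding derivative_condition_def by auto
  have deriv: "AE u in lborel. 0 < u \<longrightarrow> ((\<lambda>s. N (s, 1)) has_real_derivative cdf M u) (at u)"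
    using dc unfolding derivative_condition_def by auto
  define S where "S = {u. t < u \<and> (0 < u \<longrightarrow> ((\<lambda>s. N (s, 1)) has_real_derivative cdf M u) (at u))}"
  show "cdf M t * (s - t) \<le> N (s, 1) - N (t, 1)"
  proof (rule subgradient_at_right_limit)
    show "isCont (\<lambda>s. N (s, 1)) t" using norm by (rule is_norm_R2_isCont_on_line)
    show "continuous (at_right t) (cdf M)" by (rule cdf_is_right_cont)
    show "t islimpt S" unfolding S_def using deriv by (rule islimpt_right_if_AE_lborel)
    show "S \<subseteq> {t<..}" by (auto simp: S_def)
    show "cdf M u * (s - u) \<le> N (s, 1) - N (u, 1)" if "u \<in> S" for u
      using that \<open>t \<in> {0..}\<close> unfolding S_def
      by (intro convex_on_imp_above_tangent[OF is_norm_R2_convex_on_line[OF norm] connected_UNIV]) auto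
  qed
qed

lemma norm_line_eq_F_norm_if_derivative_condition:
  assumes norm: "is_norm_R2 N" and dc: "derivative_condition N M" and "0 \<le> t"
  shows "N (t, 1) = F_norm M (t, 1)"
proof -
  have dist: "real_distribution M" and nonneg: "AE \<xi> in M. 0 \<le> \<xi>" and int: "integrable M (\<lambda>\<xi>. \<xi>)"
    and mean: "(\<integral>\<xi>. \<xi> \<partial>M) = N (0, 1)"
    using dc unfolding derivative_condition_def by auto
  have "N (t, 1) - N (0, 1) = F_norm M (t, 1) - F_norm M (0, 1)"
    using \<open>0 \<le> t\<close> subgradients_norm_line_if_derivative_condition[OF norm dc]
      real_distribution.subgradients_F_norm[OF dist int]
    by (intro subgradients_on_eq_increments) (auto elim!: subgradients_on_subset)
  then show ?thesis
    using real_distribution.F_norm_zero_one[OF dist nonneg] mean by simp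
qed

lemma norm_first_axis_if_derivative_condition:
  assumes norm: "is_norm_R2 N" and dc: "derivative_condition N M"
  shows "N (1, 0) = 1"
proof -
  have dist: "real_distribution M" and nonneg: "AE \<xi> in M. 0 \<le> \<xi>" and int: "integrable M (\<lambda>\<xi>. \<xi>)"
    and mean: "(\<integral>\<xi>. \<xi> \<partial>M) = N (0, 1)"
    using dc unfolding derivative_condition_def by auto
  have "real n * \<bar>N (1, 0) - 1\<bar> \<le> 2 * N (0, 1)" for n :: nat
  proof -
    have "\<bar>N (n, 1) - N (n, 0)\<bar> \<le> N (0, 1)"
      using is_norm_R2_diff_second_le[OF norm, of n 1 0] by simp
    moreover have "N (n, 0) = n * N (1, 0)"
      using is_norm_R2_homogeneous[OF norm, of n 1 0] by simp
    moreover have "n \<le> N (n, 1)" "N (n, 1) \<le> n + N (0, 1)"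
      using real_distribution.F_norm_line_bounds[OF dist int nonneg, of n]
        norm_line_eq_F_norm_if_derivative_condition[OF norm dc, of n] mean by simp_all
    moreover have "real n * \<bar>N (1, 0) - 1\<bar> = \<bar>n * N (1, 0) - n\<bar>"
      by (metis abs_of_nat abs_mult mult.right_neutral right_diff_distrib)
    ultimately show ?thesis
      by (simp add: abs_le_iff)
  qed
  then have "N (1, 0) - 1 = 0"
    by (rule eq_0_if_multiples_bounded)
  then show ?thesis by simp
qed

lemma eq_F_norm_if_derivative_condition:
  assumes norm: "is_norm_R2 N" and "radially_symmetric N" and dc: "derivative_condition N M"
  shows "N = F_norm M"
proof (rule radially_symmetric_homogeneous_eqI)
  have dist: "real_distribution M" using dc unfolding derivative_condition_def by auto
  show "N (1, 0) = F_norm M (1, 0)"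
    using norm_first_axis_if_derivative_condition[OF norm dc] real_distribution.F_norm_first_axis[OF dist]
    by simp
qed (use assms norm_line_eq_F_norm_if_derivative_condition is_norm_R2_homogeneous
      radially_symmetric_F_norm F_norm_homogeneous in auto)

lemma derivative_condition_F_norm:
  assumes "admissible_law M"
  shows "derivative_condition (F_norm M) M"
proof -
  have "real_distribution M" "AE \<xi> in M. 0 \<le> \<xi>" "integrable M (\<lambda>\<xi>. \<xi>)"
    using assms unfolding admissible_law_def by auto
  then show ?thesis
    using real_distribution.F_norm_zero_one real_distribution.AE_F_norm_has_real_derivative_cdf
    unfolding derivative_condition_def by auto
qed

theorem corollary2p10:
  fixes N :: "real \<times> real \<Rightarrow> real"
  assumes "is_norm_R2 N"
  shows "(is_F_norm N \<longleftrightarrow>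
           radially_symmetric N \<and> (\<exists>M. derivative_condition N M))
         \<and> (\<forall>M. radially_symmetric N \<and> derivative_condition N M \<longrightarrow> N = F_norm M)"
proof -
  have "admissible_law M" if "derivative_condition N M" for M
    using that is_norm_R2_pos[OF assms, of "(0, 1)"]
    unfolding admissible_law_def derivative_condition_def by auto
  then show ?thesis
    using eq_F_norm_if_derivative_condition[OF assms] derivative_condition_F_norm radially_symmetric_F_norm
    unfolding is_F_norm_def by metis
qed

end
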